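(* Let $r \geqslant 4$ and let $F$ be a graph which is an $r$-witness set. Then $e(F) \geqslant \lambda(r)\big(v(F) - 2\big) + 1$.
   Context: $\lambda(r) = \frac{\binom{r}{2}-2}{r-2}$. The $K_r$-bootstrap process on $K_n$ from $G$: repeatedly add any edge of $K_n$ which is the only missing edge of some $r$-clique; $\langle G\rangle_{K_r}$ is the final closure. Witness-Set Algorithm: for $e \in G$ set $F(e) = \{e\}$. Choose an order in which to infect the edges of $\langle G\rangle_{K_r} \setminus G$ one by one, each newly infected edge completing some $r$-clique all of whose other edges are already in $G$ or already infected (if several cliques are completed, choose one). When $e$ is infected by the chosen $r$-clique $K$, set $F(e) := \bigcup_{e' \in K,\, e' \neq e} F(e')$. A graph $F$ is an $r$-witness set if there exist a graph $G$, an edge $e \in \langle G\rangle_{K_r}$ and a realization of this algorithm (choice of order and cliques) with $F = F(e)$; here $v(F)$ is the number of vertices spanned by the edges of $F$. *)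

theory Defs
  imports Complex_Main
begin

text \<open>Graphs on the vertex set {0..<n} of K_n; an edge is a 2-element vertex set,
a graph is a set of edges.\<close>

definition edgesK :: "nat \<Rightarrow> nat set set" where
  "edgesK n = {e. e \<subseteq> {..<n} \<and> card e = 2}"

definition cliqueE :: "nat set \<Rightarrow> nat set set" where
  "cliqueE K = {e. e \<subseteq> K \<and> card e = 2}"

text \<open>Final closure of the K_r-bootstrap process on K_n started from G.\<close>
inductive_set bootstrap :: "nat \<Rightarrow> nat \<Rightarrow> nat set set \<Rightarrow> nat set set"
  for r n G where
  base: "e \<in> G \<Longrightarrow> e \<in> bootstrap r n G"
| step: "\<lbrakk> K \<subseteq> {..<n}; card K = r; e \<in> cliqueE K;
           \<forall>f \<in> cliqueE K - {e}. f \<in> bootstrap r n G \<rbrakk> \<Longrightarrow> e \<in> bootstrap r n G"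

text \<open>A realization: a list of (infected edge, chosen r-clique vertex set), in infection order.\<close>
definition valid_seq :: "nat \<Rightarrow> nat \<Rightarrow> nat set set \<Rightarrow> (nat set \<times> nat set) list \<Rightarrow> bool" where
  "valid_seq r n G seq \<longleftrightarrow>
     distinct (map fst seq) \<and>
     (\<forall>i < length seq.
        fst (seq ! i) \<notin> G \<and>
        snd (seq ! i) \<subseteq> {..<n} \<and> card (snd (seq ! i)) = r \<and>
        fst (seq ! i) \<in> cliqueE (snd (seq ! i)) \<and>
        (\<forall>f \<in> cliqueE (snd (seq ! i)) - {fst (seq ! i)}.
            f \<in> G \<or> f \<in> set (map fst (take i seq))))"

text \<open>The witness sets F(.) computed by the algorithm; the argument list is the
realization in REVERSE order (last infected edge first).\<close>
fun witmapR :: "nat set set \<Rightarrow> (nat set \<times> nat set) list \<Rightarrow> nat set \<Rightarrow> nat set set" where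
  "witmapR G [] = (\<lambda>e. if e \<in> G then {e} else {})"
| "witmapR G ((e, K) # ys) =
     (witmapR G ys)(e := (\<Union>f \<in> cliqueE K - {e}. witmapR G ys f))"

definition witmap :: "nat set set \<Rightarrow> (nat set \<times> nat set) list \<Rightarrow> nat set \<Rightarrow> nat set set" where
  "witmap G seq = witmapR G (rev seq)"

definition witness_set :: "nat \<Rightarrow> nat set set \<Rightarrow> bool" where
  "witness_set r F \<longleftrightarrow>
     (\<exists>n G seq e. G \<subseteq> edgesK n \<and> valid_seq r n G seq \<and>
        set (map fst seq) = bootstrap r n G - G \<and>
        e \<in> bootstrap r n G \<and> F = witmap G seq e)"

definition lam :: "nat \<Rightarrow> real" where
  "lam r = (real (r choose 2) - 2) / (real r - 2)"

definition vF :: "nat set set \<Rightarrow> nat" where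
  "vF F = card (\<Union>F)"

end

theory Submission
  imports Defs
begin

text \<open>Let J index the r-cliques used by the algorithm to build F = F(e). Each of them contributes
  one infected edge; these edges are distinct and lie outside G, and F consists of the remaining
  edges of the cliques. So e(F) = e(J) - |J| and v(F) = v(J), where e(J) and v(J) count the
  edges and vertices of the union of the cliques, and it suffices to show that the excess
  e(J) - |J| - \<lambda>(r)(v(J) - 2) is at least 1; for a single clique it is exactly 1.

  Taking the cliques in infection order, maintain a partition of those seen so far into
  edge-disjoint blocks of excess at least 1: a new clique absorbs a maximal set of blocks such
  that the excess stays at least 1. Every other block meets the result in at most one vertex.
  Otherwise, with q \<ge> 2 common vertices, the two sides share only edges of the new clique other
  than its infected edge (which is fresh), at most 1 + \<lambda>(r)(q - 2) of them as r \<ge> 4, and the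
  block could be absorbed as well. Finally every clique of J but the last has its infected edge
  in a later clique of J, so edge-disjointness of the blocks puts all of J into one block.\<close>

lemma of_nat_choose_two: "real (q choose 2) = real q * (real q - 1) / 2"
proof (induction q)
  case (Suc q)
  have "real (Suc q choose 2) = real q + real (q choose 2)"
    by (simp add: numeral_2_eq_2)
  with Suc show ?case by (simp add: field_simps)
qed simp

lemma lam_times: "2 < r \<Longrightarrow> lam r * (real r - 2) = real (r choose 2) - 2"
  by (simp add: lam_def)

lemma lam_nonneg:
  assumes "3 \<le> r" shows "0 \<le> lam r"
proof -
  have "3 * 2 \<le> real r * (real r - 1)"
    using assms by (intro mult_mono) auto
  then show ?thesis
    using assms by (simp add: lam_def of_nat_choose_two)
qed

lemma choose_two_le_lam:
  assumes "4 \<le> r" "2 \<le> q" "q < r"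
  shows "real (q choose 2) \<le> 1 + lam r * (real q - 2)"
proof -
  have "2 * 1 \<le> (real r - 2) * (real r - real q)"
    using assms by (intro mult_mono) auto
  then have "0 \<le> (real q - 2) * ((real r - 2) * (real r - real q) - 2)"
    using assms by (intro mult_nonneg_nonneg) auto
  then have "(real (q choose 2) - 1) * (real r - 2) \<le> (real q - 2) * (real (r choose 2) - 2)"
    unfolding of_nat_choose_two by (simp add: field_simps)
  then have "real (q choose 2) - 1 \<le> (real q - 2) * (real (r choose 2) - 2) / (real r - 2)"
    using assms by (simp add: pos_le_divide_eq)
  then show ?thesis
    by (simp add: lam_def algebra_simps)
qed

lemma finite_cliqueE: "finite K \<Longrightarrow> finite (cliqueE K)"
  unfolding cliqueE_def by (rule finite_subset[of _ "Pow K"]) auto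

lemma card_cliqueE: "finite K \<Longrightarrow> card (cliqueE K) = card K choose 2"
  unfolding cliqueE_def by (rule n_subsets)

lemma cliqueE_Int: "cliqueE (X \<inter> Y) = cliqueE X \<inter> cliqueE Y"
  unfolding cliqueE_def by auto

lemma two_le_card_if_cliqueE: "e \<in> cliqueE X \<Longrightarrow> finite X \<Longrightarrow> 2 \<le> card X"
  unfolding cliqueE_def by (metis (mono_tags, lifting) card_mono mem_Collect_eq)

lemma Union_cliqueE_Diff:
  assumes fK: "finite K" and cK: "3 \<le> card K" and e: "e \<in> cliqueE K"
  shows "\<Union>(cliqueE K - {e}) = K"
proof
  show "\<Union>(cliqueE K - {e}) \<subseteq> K" unfolding cliqueE_def by blast
next
  have eK: "e \<subseteq> K" and ce: "card e = 2" using e unfolding cliqueE_def by auto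
  show "K \<subseteq> \<Union>(cliqueE K - {e})"
  proof
    fix v assume vK: "v \<in> K"
    obtain w where wK: "w \<in> K" and wv: "w \<noteq> v" and we: "{v, w} \<noteq> e"
    proof (cases "v \<in> e")
      case True
      have "card (K - e) \<noteq> 0" using card_Diff_subset[OF _ eK] fK eK ce cK
        by (simp add: finite_subset)
      then obtain w where "w \<in> K" "w \<notin> e" by (metis Diff_iff all_not_in_conv card.empty)
      with True that show ?thesis by blast
    next
      case False
      obtain w where "w \<in> e" using ce by fastforce
      with False eK that show ?thesis by blast
    qed
    then have "{v, w} \<in> cliqueE K - {e}" using vK unfolding cliqueE_def by auto
    then show "v \<in> \<Union>(cliqueE K - {e})" by blast
  qed
qed

lemma card_cliqueE_Diff_le:
  assumes r: "4 \<le> r" and fK: "finite K" and cK: "card K = r" and e: "e \<in> cliqueE K"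
    and XK: "X \<subseteq> K" and Xq: "card X \<le> q" and q: "2 \<le> q"
  shows "real (card (cliqueE X - {e})) \<le> 1 + lam r * (real q - 2)"
proof -
  have fX: "finite X" using XK fK finite_subset by blast
  have lam: "0 \<le> lam r" using r by (intro lam_nonneg) simp
  have mono: "1 + lam r * (real (card X) - 2) \<le> 1 + lam r * (real q - 2)"
    using Xq lam by (simp add: mult_left_mono)
  consider "card X \<le> 1" | "2 \<le> card X" "card X < r" | "X = K"
    using card_subset_eq[OF fK XK] card_mono[OF fK XK] cK by linarith
  then show ?thesis
  proof cases
    case 1
    then have "cliqueE X = {}" using two_le_card_if_cliqueE fX by fastforce
    then show ?thesis using lam q by simp
  next
    case 2
    have "card (cliqueE X - {e}) \<le> card X choose 2"
      using card_cliqueE[OF fX] card_Diff1_le[of "cliqueE X" e] by simp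
    then have "real (card (cliqueE X - {e})) \<le> real (card X choose 2)" by linarith
    also have "\<dots> \<le> 1 + lam r * (real (card X) - 2)"
      using choose_two_le_lam r 2 by blast
    finally show ?thesis using mono by linarith
  next
    case 3
    have "r choose 2 \<ge> 1" using r by (simp add: Suc_le_eq)
    then have "real (card (cliqueE X - {e})) = real (r choose 2) - 1"
      using 3 e cK card_cliqueE[OF fK] finite_cliqueE[OF fK] by simp
    also have "\<dots> = 1 + lam r * (real (card X) - 2)" using lam_times[of r] r 3 cK by simp
    finally show ?thesis using mono by linarith
  qed
qed

definition clique_edges :: "(nat \<Rightarrow> nat set) \<Rightarrow> nat set \<Rightarrow> nat set set" where
  "clique_edges V J = (\<Union>l\<in>J. cliqueE (V l))"

definition clique_verts :: "(nat \<Rightarrow> nat set) \<Rightarrow> nat set \<Rightarrow> nat set" where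
  "clique_verts V J = (\<Union>l\<in>J. V l)"

definition excess :: "nat \<Rightarrow> (nat \<Rightarrow> nat set) \<Rightarrow> nat set \<Rightarrow> real" where
  "excess r V J = real (card (clique_edges V J)) - real (card J)
     - lam r * (real (card (clique_verts V J)) - 2)"

lemma clique_edges_Un: "clique_edges V (A \<union> B) = clique_edges V A \<union> clique_edges V B"
  unfolding clique_edges_def by blast

lemma clique_verts_Un: "clique_verts V (A \<union> B) = clique_verts V A \<union> clique_verts V B"
  unfolding clique_verts_def by blast

lemma clique_edges_Union: "clique_edges V (\<Union>M) = (\<Union>C\<in>M. clique_edges V C)"
  unfolding clique_edges_def by blast

lemma clique_edges_subset_cliqueE: "clique_edges V J \<subseteq> cliqueE (clique_verts V J)"
  unfolding clique_edges_def clique_verts_def cliqueE_def by blast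

lemma finite_clique_edges:
  "finite J \<Longrightarrow> (\<And>l. l \<in> J \<Longrightarrow> finite (V l)) \<Longrightarrow> finite (clique_edges V J)"
  unfolding clique_edges_def by (simp add: finite_cliqueE)

lemma finite_clique_verts:
  "finite J \<Longrightarrow> (\<And>l. l \<in> J \<Longrightarrow> finite (V l)) \<Longrightarrow> finite (clique_verts V J)"
  unfolding clique_verts_def by simp

lemma excess_singleton:
  "2 < r \<Longrightarrow> finite (V i) \<Longrightarrow> card (V i) = r \<Longrightarrow> excess r V {i} = 1"
  using lam_times[of r]
  by (simp add: excess_def clique_edges_def clique_verts_def card_cliqueE)

lemma real_card_Un:
  "finite X \<Longrightarrow> finite Y \<Longrightarrow>
    real (card (X \<union> Y)) = real (card X) + real (card Y) - real (card (X \<inter> Y))"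
  using card_Un_Int[of X Y] by (simp flip: of_nat_add)

lemma excess_Un:
  assumes fA: "finite A" and fB: "finite B" and AB: "A \<inter> B = {}"
    and fV: "\<And>l. l \<in> A \<union> B \<Longrightarrow> finite (V l)"
  shows "excess r V (A \<union> B) = excess r V A + excess r V B
    - real (card (clique_edges V A \<inter> clique_edges V B))
    + lam r * (real (card (clique_verts V A \<inter> clique_verts V B)) - 2)"
proof -
  have "finite (clique_edges V A)" "finite (clique_edges V B)"
    "finite (clique_verts V A)" "finite (clique_verts V B)"
    using fA fB fV by (auto intro!: finite_clique_edges finite_clique_verts)
  then have E: "real (card (clique_edges V (A \<union> B))) = real (card (clique_edges V A))
      + real (card (clique_edges V B)) - real (card (clique_edges V A \<inter> clique_edges V B))"
    and W: "real (card (clique_verts V (A \<union> B))) = real (card (clique_verts V A))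
      + real (card (clique_verts V B)) - real (card (clique_verts V A \<inter> clique_verts V B))"
    unfolding clique_edges_Un clique_verts_Un
    by (simp_all add: real_card_Un)
  have J: "card (A \<union> B) = card A + card B" using card_Un_disjoint[OF fA fB AB] .
  show ?thesis unfolding excess_def E W J by (simp add: algebra_simps)
qed

lemma disjnt_clique_edges:
  assumes "finite (clique_verts V A \<inter> clique_verts V B)"
    and "card (clique_verts V A \<inter> clique_verts V B) \<le> 1"
  shows "disjnt (clique_edges V A) (clique_edges V B)"
proof -
  have "clique_edges V A \<inter> clique_edges V B \<subseteq> cliqueE (clique_verts V A \<inter> clique_verts V B)"
    using clique_edges_subset_cliqueE[of V] by (auto simp: cliqueE_Int)
  then show ?thesis
    using assms two_le_card_if_cliqueE unfolding disjnt_def by fastforce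
qed

definition fresh_cliques :: "nat \<Rightarrow> nat \<Rightarrow> (nat \<Rightarrow> nat set) \<Rightarrow> (nat \<Rightarrow> nat set) \<Rightarrow> bool" where
  "fresh_cliques r len V u \<longleftrightarrow>
     (\<forall>l<len. finite (V l) \<and> card (V l) = r \<and> u l \<in> cliqueE (V l)) \<and>
     (\<forall>j l. j < l \<and> l < len \<longrightarrow> u l \<notin> cliqueE (V j))"

lemma fresh_cliquesD:
  assumes "fresh_cliques r len V u" and "l < len"
  shows "finite (V l)" "card (V l) = r" "u l \<in> cliqueE (V l)" "j < l \<Longrightarrow> u l \<notin> cliqueE (V j)"
  using assms unfolding fresh_cliques_def by auto

lemma excess_insert_Un_ge_one:
  assumes r: "4 \<le> r" and fc: "fresh_cliques r len V u" and i: "i < len"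
    and C: "C \<subseteq> {..<i}" and B: "B \<subseteq> {..<i}" and CB: "C \<inter> B = {}"
    and EB: "disjnt (clique_edges V C) (clique_edges V B)"
    and exC: "1 \<le> excess r V (insert i C)" and exB: "1 \<le> excess r V B"
    and q: "2 \<le> card (clique_verts V (insert i C) \<inter> clique_verts V B)"
  shows "1 \<le> excess r V (insert i C \<union> B)"
proof -
  let ?A = "insert i C" and ?q = "card (clique_verts V (insert i C) \<inter> clique_verts V B)"
  have fV: "\<And>l. l \<in> ?A \<union> B \<Longrightarrow> finite (V l)"
    using C B i fresh_cliquesD(1)[OF fc] by force
  have fA: "finite ?A" and fB: "finite B"
    using C B finite_subset by blast+
  have AB: "?A \<inter> B = {}" using CB B by auto
  have fVB: "finite (clique_verts V B)" using finite_clique_verts[OF fB] fV by blast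
  have shared: "clique_edges V ?A \<inter> clique_edges V B \<subseteq> cliqueE (V i \<inter> clique_verts V B) - {u i}"
  proof
    fix x assume x: "x \<in> clique_edges V ?A \<inter> clique_edges V B"
    then have "x \<in> cliqueE (V i)"
      using EB unfolding clique_edges_def disjnt_def by blast
    moreover have "x \<in> cliqueE (clique_verts V B)"
      using x clique_edges_subset_cliqueE by blast
    moreover have "x \<noteq> u i"
      using x B fresh_cliquesD(4)[OF fc i] unfolding clique_edges_def by blast
    ultimately show "x \<in> cliqueE (V i \<inter> clique_verts V B) - {u i}"
      by (simp add: cliqueE_Int)
  qed
  have "real (card (clique_edges V ?A \<inter> clique_edges V B))
      \<le> real (card (cliqueE (V i \<inter> clique_verts V B) - {u i}))"
    using shared fVB by (simp add: card_mono finite_cliqueE)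
  also have "\<dots> \<le> 1 + lam r * (real ?q - 2)"
  proof (rule card_cliqueE_Diff_le[OF r _ _ _ _ _ q])
    show "card (V i \<inter> clique_verts V B) \<le> ?q"
      using fVB by (intro card_mono) (auto simp: clique_verts_def)
  qed (use fresh_cliquesD[OF fc i] in auto)
  finally show ?thesis
    using excess_Un[OF fA fB AB fV] exC exB by simp
qed

definition block_partition :: "nat \<Rightarrow> (nat \<Rightarrow> nat set) \<Rightarrow> nat set set \<Rightarrow> nat set \<Rightarrow> bool" where
  "block_partition r V P S \<longleftrightarrow> \<Union>P = S \<and>
     pairwise (\<lambda>B B'. disjnt B B' \<and> disjnt (clique_edges V B) (clique_edges V B')) P \<and>
     (\<forall>B\<in>P. 1 \<le> excess r V B)"

lemma block_partition_replace:
  assumes P: "block_partition r V P S" and M: "M \<subseteq> P" and i: "i \<notin> S"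
    and ex: "1 \<le> excess r V (insert i (\<Union>M))"
    and E: "\<And>B. B \<in> P - M \<Longrightarrow> disjnt (clique_edges V (insert i (\<Union>M))) (clique_edges V B)"
  shows "block_partition r V (insert (insert i (\<Union>M)) (P - M)) (insert i S)"
proof -
  let ?A = "insert i (\<Union>M)"
    and ?R = "\<lambda>B B'. disjnt B B' \<and> disjnt (clique_edges V B) (clique_edges V B')"
  have UP: "\<Union>P = S" and pw: "pairwise ?R P" and exP: "\<forall>B\<in>P. 1 \<le> excess r V B"
    using P unfolding block_partition_def by auto
  have "?R ?A B \<and> ?R B ?A" if "B \<in> P - M" for B
  proof -
    have "disjnt C B" if "C \<in> M" for C
    proof -
      have "C \<in> P" "B \<in> P" "C \<noteq> B" using that M \<open>B \<in> P - M\<close> by auto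
      then show ?thesis using pairwiseD(1)[OF pw] by blast
    qed
    moreover have "i \<notin> B" using \<open>B \<in> P - M\<close> UP i by blast
    ultimately show ?thesis
      using E[OF that] by (auto simp: disjnt_sym disjnt_def)
  qed
  then have "pairwise ?R (insert ?A (P - M))"
    using pairwise_subset[OF pw, of "P - M"] by (simp add: pairwise_insert)
  moreover have "\<Union>(insert ?A (P - M)) = insert i (\<Union>(M \<union> (P - M)))" by auto
  moreover have "M \<union> (P - M) = P" using M by blast
  ultimately show ?thesis
    using exP ex UP unfolding block_partition_def by auto
qed

lemma block_partition_insert:
  assumes r: "4 \<le> r" and fc: "fresh_cliques r len V u" and i: "i < len"
    and P: "block_partition r V P S" and S: "S \<subseteq> {..<i}"
  shows "\<exists>P'. block_partition r V P' (insert i S)"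
proof -
  have UP: "\<Union>P = S" and ex: "\<And>B. B \<in> P \<Longrightarrow> 1 \<le> excess r V B"
    and pw: "pairwise (\<lambda>B B'. disjnt B B' \<and> disjnt (clique_edges V B) (clique_edges V B')) P"
    using P unfolding block_partition_def by auto
  have fS: "finite S" using S finite_subset by blast
  have fP: "finite P" using UP fS by (simp add: finite_UnionD)
  define Ms where "Ms = {M. M \<subseteq> P \<and> 1 \<le> excess r V (insert i (\<Union>M))}"
  have "{} \<in> Ms"
    using excess_singleton fresh_cliquesD[OF fc i] r unfolding Ms_def by simp
  moreover have "finite Ms" unfolding Ms_def using fP by simp
  ultimately obtain M where MMs: "M \<in> Ms" and max: "\<forall>M'\<in>Ms. M \<subseteq> M' \<longrightarrow> M = M'"
    using finite_has_maximal2[of Ms "{}"] by auto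
  have MP: "M \<subseteq> P" and exM: "1 \<le> excess r V (insert i (\<Union>M))"
    using MMs unfolding Ms_def by auto
  have MS: "\<Union>M \<subseteq> {..<i}" using MP UP S by blast
  have "disjnt (clique_edges V (insert i (\<Union>M))) (clique_edges V B)" if B: "B \<in> P - M" for B
  proof (rule disjnt_clique_edges)
    have BS: "B \<subseteq> {..<i}" using B UP S by blast
    then have "finite (clique_verts V B)"
      using i fresh_cliquesD(1)[OF fc] finite_subset by (intro finite_clique_verts) auto
    then show "finite (clique_verts V (insert i (\<Union>M)) \<inter> clique_verts V B)" by blast
    show "card (clique_verts V (insert i (\<Union>M)) \<inter> clique_verts V B) \<le> 1"
    proof (rule ccontr)
      assume q: "\<not> ?thesis"
      have dC: "disjnt C B \<and> disjnt (clique_edges V C) (clique_edges V B)" if "C \<in> M" for C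
        using pairwiseD(1)[OF pw] that B MP by blast
      then have "\<Union>M \<inter> B = {}" and "disjnt (clique_edges V (\<Union>M)) (clique_edges V B)"
        by (auto simp: disjnt_def clique_edges_Union)
      with q have "1 \<le> excess r V (insert i (\<Union>M) \<union> B)"
        using excess_insert_Un_ge_one[OF r fc i MS BS _ _ exM ex] B by simp
      moreover have "insert i (\<Union>M) \<union> B = insert i (\<Union>(insert B M))" by auto
      ultimately have "insert B M \<in> Ms" using B MP unfolding Ms_def by simp
      then show False using max B by blast
    qed
  qed
  then show ?thesis
    using block_partition_replace[OF P MP _ exM] S by blast
qed

lemma block_partition_exists:
  assumes r: "4 \<le> r" and fc: "fresh_cliques r len V u" and J: "J \<subseteq> {..<len}"
  shows "\<exists>P. block_partition r V P J"
proof -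
  have "\<exists>P. block_partition r V P (J \<inter> {..<i})" if "i \<le> len" for i
    using that
  proof (induction i)
    case 0
    have "block_partition r V {} {}" unfolding block_partition_def by simp
    then show ?case by auto
  next
    case (Suc i)
    then obtain P where P: "block_partition r V P (J \<inter> {..<i})" by auto
    show ?case
    proof (cases "i \<in> J")
      case True
      then have "J \<inter> {..<Suc i} = insert i (J \<inter> {..<i})" by auto
      with block_partition_insert[OF r fc _ P] Suc.prems show ?thesis by auto
    next
      case False
      then have "J \<inter> {..<Suc i} = J \<inter> {..<i}" by (auto simp: less_Suc_eq)
      with P show ?thesis by auto
    qed
  qed
  with J show ?thesis by (metis inf.absorb1 order_refl)
qed

definition chained :: "(nat \<Rightarrow> nat set) \<Rightarrow> (nat \<Rightarrow> nat set) \<Rightarrow> nat set \<Rightarrow> nat \<Rightarrow> bool" where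
  "chained V u J l \<longleftrightarrow> l \<in> J \<and> (\<forall>a\<in>J. a \<le> l) \<and>
     (\<forall>a\<in>J - {l}. \<exists>b\<in>J. a < b \<and> u a \<in> cliqueE (V b))"

lemma excess_ge_one_if_chained:
  assumes r: "4 \<le> r" and fc: "fresh_cliques r len V u" and J: "J \<subseteq> {..<len}"
    and ch: "chained V u J l"
  shows "1 \<le> excess r V J"
proof -
  obtain P where UP: "\<Union>P = J" and ex: "\<And>B. B \<in> P \<Longrightarrow> 1 \<le> excess r V B"
    and pw: "pairwise (\<lambda>B B'. disjnt B B' \<and> disjnt (clique_edges V B) (clique_edges V B')) P"
    using block_partition_exists[OF r fc J] unfolding block_partition_def by auto
  obtain B0 where B0: "B0 \<in> P" "l \<in> B0" using UP ch unfolding chained_def by auto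
  have "J \<subseteq> B0"
  proof (rule ccontr)
    assume "\<not> J \<subseteq> B0"
    have fin: "finite (J - B0)" using J finite_subset by blast
    have ne: "J - B0 \<noteq> {}" using \<open>\<not> J \<subseteq> B0\<close> by blast
    define a where "a = Max (J - B0)"
    have a: "a \<in> J - B0" using Max_in[OF fin ne] unfolding a_def .
    have above: "\<And>a'. a' \<in> J - B0 \<Longrightarrow> a' \<le> a" using Max_ge[OF fin] unfolding a_def .
    have "a \<in> J - {l}" using a B0 by auto
    then obtain b where b: "b \<in> J" "a < b" "u a \<in> cliqueE (V b)"
      using ch unfolding chained_def by blast
    then have "b \<in> B0" using above by force
    obtain Ba where Ba: "Ba \<in> P" "a \<in> Ba" using a UP by auto
    have "u a \<in> clique_edges V Ba" "u a \<in> clique_edges V B0"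
      using Ba b \<open>b \<in> B0\<close> fresh_cliquesD(3)[OF fc] a J unfolding clique_edges_def by auto
    moreover have "Ba \<noteq> B0" using a Ba by auto
    ultimately show False
      using pairwiseD(1)[OF pw Ba(1) B0(1)] by (auto simp: disjnt_def)
  qed
  then show ?thesis using UP B0 ex by (metis Union_upper subset_antisym)
qed

text \<open>The positions in the realization of the cliques used to build witmap G seq e. As for
  witmapR the list is traversed in reverse, so the entry in front of ys sits at position
  length ys.\<close>
fun clique_indicesR :: "(nat set \<times> nat set) list \<Rightarrow> nat set \<Rightarrow> nat set" where
  "clique_indicesR [] = (\<lambda>e. {})"
| "clique_indicesR ((e, K) # ys) =
     (clique_indicesR ys)(e := insert (length ys) (\<Union>f \<in> cliqueE K - {e}. clique_indicesR ys f))"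

definition clique_indices :: "(nat set \<times> nat set) list \<Rightarrow> nat set \<Rightarrow> nat set" where
  "clique_indices seq = clique_indicesR (rev seq)"

lemma witmap_take_Suc:
  "i < length seq \<Longrightarrow> witmap G (take (Suc i) seq) = (witmap G (take i seq))(fst (seq ! i) :=
     (\<Union>f\<in>cliqueE (snd (seq ! i)) - {fst (seq ! i)}. witmap G (take i seq) f))"
  by (cases "seq ! i") (simp add: witmap_def take_Suc_conv_app_nth)

lemma clique_indices_take_Suc:
  "i < length seq \<Longrightarrow> clique_indices (take (Suc i) seq) = (clique_indices (take i seq))(fst (seq ! i) :=
     insert i (\<Union>f\<in>cliqueE (snd (seq ! i)) - {fst (seq ! i)}. clique_indices (take i seq) f))"
  by (cases "seq ! i") (simp add: clique_indices_def take_Suc_conv_app_nth min_def)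

definition witness_shape :: "nat set set \<Rightarrow> (nat \<Rightarrow> nat set) \<Rightarrow> (nat \<Rightarrow> nat set) \<Rightarrow>
    nat set set \<Rightarrow> nat set \<Rightarrow> nat set \<Rightarrow> nat \<Rightarrow> bool" where
  "witness_shape G V u W J f i \<longleftrightarrow>
     W = (clique_edges V J \<union> {f}) \<inter> G \<and> clique_edges V J \<subseteq> G \<union> u ` J \<and>
     \<Union>W = f \<union> clique_verts V J \<and> J \<subseteq> {..<i} \<and>
     (if f \<in> G then J = {} else \<exists>l. f = u l \<and> chained V u J l)"

lemma witness_shapeD:
  assumes "witness_shape G V u W J f i"
  shows "W = (clique_edges V J \<union> {f}) \<inter> G" "clique_edges V J \<subseteq> G \<union> u ` J"
    "\<Union>W = f \<union> clique_verts V J" "J \<subseteq> {..<i}" "f \<in> G \<Longrightarrow> J = {}"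
    "f \<notin> G \<Longrightarrow> \<exists>l. f = u l \<and> chained V u J l"
  using assms unfolding witness_shape_def by (blast, blast, blast, blast, auto)

lemma witness_shape_mono:
  assumes "witness_shape G V u W J f i" and "i \<le> i'"
  shows "witness_shape G V u W J f i'"
proof -
  have "{..<i} \<subseteq> {..<i'}" using assms(2) by auto
  with assms(1) show ?thesis unfolding witness_shape_def by (meson subset_trans)
qed

lemma chained_insert:
  assumes C: "C \<subseteq> cliqueE (V i)" and J: "\<And>g. g \<in> C \<Longrightarrow> J g \<subseteq> {..<i}"
    and ch: "\<And>g. g \<in> C \<Longrightarrow> J g = {} \<or> (\<exists>l. g = u l \<and> chained V u (J g) l)"
  shows "chained V u (insert i (\<Union>g\<in>C. J g)) i"
proof -
  have "\<exists>b\<in>insert i (\<Union>g\<in>C. J g). a < b \<and> u a \<in> cliqueE (V b)" if a: "a \<in> J g" and g: "g \<in> C" for a g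
  proof -
    from a g ch obtain l where gl: "g = u l" and chl: "chained V u (J g) l" by blast
    show ?thesis
    proof (cases "a = l")
      case True
      then show ?thesis using a g gl C J by blast
    next
      case False
      then obtain b where "b \<in> J g" "a < b" "u a \<in> cliqueE (V b)"
        using chl a unfolding chained_def by blast
      then show ?thesis using g by blast
    qed
  qed
  moreover have "a \<le> i" if "a \<in> J g" "g \<in> C" for a g
    using J that by fastforce
  ultimately show ?thesis unfolding chained_def by blast
qed

lemma Union_UN_cliqueE_Diff:
  assumes "finite K" "3 \<le> card K" "e \<in> cliqueE K"
    and "\<And>g. g \<in> cliqueE K - {e} \<Longrightarrow> \<Union>(W g) = g \<union> X g"
  shows "\<Union>(\<Union>g\<in>cliqueE K - {e}. W g) = K \<union> (\<Union>g\<in>cliqueE K - {e}. X g)"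
proof -
  have "\<Union>(\<Union>g\<in>cliqueE K - {e}. W g) = (\<Union>g\<in>cliqueE K - {e}. \<Union>(W g))" by blast
  also have "\<dots> = (\<Union>g\<in>cliqueE K - {e}. g \<union> X g)"
    using assms(4) by (intro SUP_cong) auto
  also have "\<dots> = \<Union>(cliqueE K - {e}) \<union> (\<Union>g\<in>cliqueE K - {e}. X g)" by blast
  finally show ?thesis unfolding Union_cliqueE_Diff[OF assms(1-3)] .
qed

lemma witness_shape_new_edge:
  assumes uG: "u i \<notin> G" and ui: "u i \<in> cliqueE (V i)" and fV: "finite (V i)"
    and cV: "3 \<le> card (V i)"
    and N: "\<And>g. g \<in> cliqueE (V i) - {u i} \<Longrightarrow> witness_shape G V u (W g) (J g) g i"
  shows "witness_shape G V u (\<Union>g\<in>cliqueE (V i) - {u i}. W g)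
    (insert i (\<Union>g\<in>cliqueE (V i) - {u i}. J g)) (u i) (Suc i)"
proof -
  define C where "C = cliqueE (V i) - {u i}"
  define JJ where "JJ = insert i (\<Union>g\<in>C. J g)"
  note shape = witness_shapeD[OF N, folded C_def]
  have cl: "cliqueE (V i) = insert (u i) C" unfolding C_def using ui by blast
  have EJJ: "clique_edges V JJ = insert (u i) C \<union> (\<Union>g\<in>C. clique_edges V (J g))"
    unfolding JJ_def clique_edges_def cl[symmetric] by blast
  have "(\<Union>g\<in>C. W g) = (\<Union>g\<in>C. (clique_edges V (J g) \<union> {g}) \<inter> G)"
    using shape(1) by simp
  also have "\<dots> = (clique_edges V JJ \<union> {u i}) \<inter> G"
    unfolding EJJ using uG by blast
  finally have Wq: "(\<Union>g\<in>C. W g) = (clique_edges V JJ \<union> {u i}) \<inter> G" .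
  have Esub: "clique_edges V JJ \<subseteq> G \<union> u ` JJ"
  proof -
    have "g \<in> G \<union> u ` JJ" if g: "g \<in> C" for g
    proof (cases "g \<in> G")
      case False
      then obtain l where "g = u l" "l \<in> J g" using shape(6)[OF g] unfolding chained_def by blast
      then show ?thesis using g unfolding JJ_def by blast
    qed simp
    moreover have "clique_edges V (J g) \<subseteq> G \<union> u ` JJ" if "g \<in> C" for g
      using shape(2)[OF that] that unfolding JJ_def by blast
    moreover have "i \<in> JJ" unfolding JJ_def by blast
    ultimately show ?thesis unfolding EJJ by blast
  qed
  have VJJ: "clique_verts V JJ = V i \<union> (\<Union>g\<in>C. clique_verts V (J g))"
    unfolding JJ_def clique_verts_def by blast
  have "u i \<subseteq> V i" using ui unfolding cliqueE_def by blast
  have U: "\<Union>(\<Union>g\<in>C. W g) = V i \<union> (\<Union>g\<in>C. clique_verts V (J g))"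
    unfolding C_def using shape(3)[unfolded C_def] by (rule Union_UN_cliqueE_Diff[OF fV cV ui])
  have Uq: "\<Union>(\<Union>g\<in>C. W g) = u i \<union> clique_verts V JJ"
    unfolding U VJJ using \<open>u i \<subseteq> V i\<close> by blast
  have "chained V u JJ i" unfolding JJ_def
  proof (rule chained_insert)
    show "C \<subseteq> cliqueE (V i)" unfolding C_def by blast
    show "J g \<subseteq> {..<i}" if "g \<in> C" for g using shape(4)[OF that] .
    show "J g = {} \<or> (\<exists>l. g = u l \<and> chained V u (J g) l)" if "g \<in> C" for g
      using shape(5,6)[OF that] by blast
  qed
  then have "JJ \<subseteq> {..<Suc i}" and "\<exists>l. u i = u l \<and> chained V u JJ l"
    unfolding chained_def by auto
  with Wq Esub Uq uG show ?thesis
    unfolding witness_shape_def C_def[symmetric] JJ_def[symmetric] by simp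
qed

lemma valid_seqD:
  assumes vs: "valid_seq r n G seq" and i: "i < length seq"
  shows "fst (seq ! i) \<notin> G" "card (snd (seq ! i)) = r" "fst (seq ! i) \<in> cliqueE (snd (seq ! i))"
    "f \<in> cliqueE (snd (seq ! i)) - {fst (seq ! i)} \<Longrightarrow> f \<in> G \<or> f \<in> (\<lambda>l. fst (seq ! l)) ` {..<i}"
proof -
  have "set (map fst (take i seq)) = (\<lambda>l. fst (seq ! l)) ` {..<i}"
    using i by (force simp: in_set_conv_nth)
  moreover have "fst (seq ! i) \<notin> G \<and> card (snd (seq ! i)) = r \<and> fst (seq ! i) \<in> cliqueE (snd (seq ! i)) \<and>
      (\<forall>f\<in>cliqueE (snd (seq ! i)) - {fst (seq ! i)}. f \<in> G \<or> f \<in> set (map fst (take i seq)))"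
    using vs i unfolding valid_seq_def by blast
  ultimately show "fst (seq ! i) \<notin> G" "card (snd (seq ! i)) = r" "fst (seq ! i) \<in> cliqueE (snd (seq ! i))"
    "f \<in> cliqueE (snd (seq ! i)) - {fst (seq ! i)} \<Longrightarrow> f \<in> G \<or> f \<in> (\<lambda>l. fst (seq ! l)) ` {..<i}"
    by auto
qed

lemma valid_seq_inj: "valid_seq r n G seq \<Longrightarrow> inj_on (\<lambda>l. fst (seq ! l)) {..<length seq}"
  unfolding valid_seq_def by (auto simp: inj_on_def distinct_conv_nth)

lemma valid_seq_fresh_cliques:
  assumes vs: "valid_seq r n G seq" and r: "0 < r"
  shows "fresh_cliques r (length seq) (\<lambda>l. snd (seq ! l)) (\<lambda>l. fst (seq ! l))"
  unfolding fresh_cliques_def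
proof (intro conjI allI impI)
  fix l assume l: "l < length seq"
  show card: "card (snd (seq ! l)) = r" using valid_seqD(2)[OF vs l] .
  show "finite (snd (seq ! l))" using card r by (intro card_ge_0_finite) simp
  show "fst (seq ! l) \<in> cliqueE (snd (seq ! l))" using valid_seqD(3)[OF vs l] .
next
  fix j l assume jl: "j < l \<and> l < length seq"
  have inj: "inj_on (\<lambda>l. fst (seq ! l)) {..<length seq}" using valid_seq_inj[OF vs] .
  show "fst (seq ! l) \<notin> cliqueE (snd (seq ! j))"
  proof
    assume in_j: "fst (seq ! l) \<in> cliqueE (snd (seq ! j))"
    have "fst (seq ! l) \<noteq> fst (seq ! j)" using jl inj_onD[OF inj, of l j] by auto
    then have "fst (seq ! l) \<in> G \<or> fst (seq ! l) \<in> (\<lambda>l. fst (seq ! l)) ` {..<j}"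
      using in_j jl valid_seqD(4)[OF vs, of j] by auto
    moreover have "fst (seq ! l) \<notin> G" using jl valid_seqD(1)[OF vs] by auto
    ultimately obtain l' where "l' < j" "fst (seq ! l) = fst (seq ! l')" by auto
    then show False using jl inj_onD[OF inj, of l l'] by auto
  qed
qed

lemma witness_shape_take:
  fixes seq :: "(nat set \<times> nat set) list"
  defines "u \<equiv> \<lambda>l. fst (seq ! l)" and "V \<equiv> \<lambda>l. snd (seq ! l)"
  assumes r: "3 \<le> r" and vs: "valid_seq r n G seq"
  shows "i \<le> length seq \<Longrightarrow> f \<in> G \<or> f \<in> u ` {..<i} \<Longrightarrow>
    witness_shape G V u (witmap G (take i seq) f) (clique_indices (take i seq) f) f i"
proof (induction i arbitrary: f)
  case 0
  then show ?case
    by (simp add: witness_shape_def witmap_def clique_indices_def clique_edges_def clique_verts_def)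
next
  case (Suc i)
  have i: "i < length seq" using Suc.prems by simp
  have step: "u i \<notin> G" "card (V i) = r" "u i \<in> cliqueE (V i)"
    "\<And>g. g \<in> cliqueE (V i) - {u i} \<Longrightarrow> g \<in> G \<or> g \<in> u ` {..<i}"
    using valid_seqD[OF vs i] unfolding u_def V_def by auto
  show ?case
  proof (cases "f = u i")
    case True
    have "witness_shape G V u (\<Union>g\<in>cliqueE (V i) - {u i}. witmap G (take i seq) g)
      (insert i (\<Union>g\<in>cliqueE (V i) - {u i}. clique_indices (take i seq) g)) (u i) (Suc i)"
    proof (rule witness_shape_new_edge)
      show "3 \<le> card (V i)" using step(2) r by simp
      then show "finite (V i)" by (intro card_ge_0_finite) simp
      show "witness_shape G V u (witmap G (take i seq) g) (clique_indices (take i seq) g) g i"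
        if "g \<in> cliqueE (V i) - {u i}" for g
        using Suc.IH step(4)[OF that] i by simp
    qed (use step in auto)
    then show ?thesis
      using True i by (simp add: witmap_take_Suc clique_indices_take_Suc u_def V_def)
  next
    case False
    then have "f \<in> G \<or> f \<in> u ` {..<i}" using Suc.prems by (auto simp: less_Suc_eq)
    then have "witness_shape G V u (witmap G (take i seq) f) (clique_indices (take i seq) f) f i"
      using Suc.IH i by simp
    then show ?thesis
      using False i by (simp add: witmap_take_Suc clique_indices_take_Suc u_def witness_shape_mono)
  qed
qed

lemma card_clique_edges_split:
  assumes fin: "finite (clique_edges V J)" and inj: "inj_on u J"
    and uJ: "u ` J \<subseteq> clique_edges V J" and EJ: "clique_edges V J \<subseteq> G \<union> u ` J"
    and uG: "u ` J \<inter> G = {}"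
  shows "card (clique_edges V J) = card (clique_edges V J \<inter> G) + card J"
proof -
  have "clique_edges V J = (clique_edges V J \<inter> G) \<union> u ` J" using uJ EJ by blast
  moreover have "card ((clique_edges V J \<inter> G) \<union> u ` J) = card (clique_edges V J \<inter> G) + card (u ` J)"
    using fin uJ uG finite_subset by (intro card_Un_disjoint) auto
  ultimately show ?thesis using card_image[OF inj] by simp
qed

lemma witness_shape_card_ge:
  fixes seq :: "(nat set \<times> nat set) list"
  defines "u \<equiv> \<lambda>l. fst (seq ! l)" and "V \<equiv> \<lambda>l. snd (seq ! l)"
  assumes r: "4 \<le> r" and vs: "valid_seq r n G seq" and e: "e \<notin> G"
    and shape: "witness_shape G V u F J e (length seq)"
  shows "lam r * (real (vF F) - 2) + 1 \<le> real (card F)"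
proof -
  obtain l where "e = u l" and ch: "chained V u J l"
    using witness_shapeD(6)[OF shape e] by blast
  have fc: "fresh_cliques r (length seq) V u"
    using valid_seq_fresh_cliques[OF vs] r unfolding u_def V_def by simp
  have J: "J \<subseteq> {..<length seq}" using witness_shapeD(4)[OF shape] .
  have "card (clique_edges V J) = card (clique_edges V J \<inter> G) + card J"
  proof (rule card_clique_edges_split)
    show "finite (clique_edges V J)"
      using J fresh_cliquesD(1)[OF fc] finite_subset by (intro finite_clique_edges) auto
    show "inj_on u J" using valid_seq_inj[OF vs] J unfolding u_def by (rule inj_on_subset)
    show "u ` J \<subseteq> clique_edges V J"
      using J fresh_cliquesD(3)[OF fc] unfolding clique_edges_def by blast
    show "u ` J \<inter> G = {}" using J valid_seqD(1)[OF vs] unfolding u_def by blast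
  qed (rule witness_shapeD(2)[OF shape])
  then have "card (clique_edges V J) = card F + card J"
    using witness_shapeD(1)[OF shape] e by simp
  moreover have "e \<subseteq> clique_verts V J"
    using \<open>e = u l\<close> ch J fresh_cliquesD(3)[OF fc]
    unfolding chained_def clique_verts_def cliqueE_def by blast
  then have "vF F = card (clique_verts V J)"
    using witness_shapeD(3)[OF shape] unfolding vF_def by (simp add: Un_absorb1)
  moreover have "1 \<le> excess r V J" by (rule excess_ge_one_if_chained[OF r fc J ch])
  ultimately show ?thesis unfolding excess_def by simp
qed

theorem lemma3p2:
  fixes r :: nat and F :: "nat set set"
  assumes "r \<ge> 4" and "witness_set r F"
  shows "real (card F) \<ge> lam r * (real (vF F) - 2) + 1"
proof -
  obtain n G seq e where G: "G \<subseteq> edgesK n" and vs: "valid_seq r n G seq"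
    and closure: "set (map fst seq) = bootstrap r n G - G" and e: "e \<in> bootstrap r n G"
    and F: "F = witmap G seq e"
    using assms(2) unfolding witness_set_def by blast
  define u where "u = (\<lambda>l. fst (seq ! l))"
  define V where "V = (\<lambda>l. snd (seq ! l))"
  have "set (map fst seq) = u ` {..<length seq}"
    unfolding u_def by (force simp: in_set_conv_nth)
  then have "e \<in> G \<or> e \<in> u ` {..<length seq}" using closure e by blast
  then have shape: "witness_shape G V u F (clique_indices seq e) e (length seq)"
    using witness_shape_take[OF _ vs, of "length seq" e] assms(1) unfolding F u_def V_def by simp
  show ?thesis
  proof (cases "e \<in> G")
    case True
    then have "F = {e}" and "card e = 2"
      using witness_shapeD[OF shape] G by (auto simp: clique_edges_def edgesK_def)
    then show ?thesis by (simp add: vF_def)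
  next
    case False
    show ?thesis using witness_shape_card_ge[OF assms(1) vs False shape[unfolded u_def V_def]] .
  qed
qed

end
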